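(* Let $p\equiv1\pmod 4$ be a prime. Let $S\subset\mathbb{P}^5$ be the surface over $\mathbb{F}_p$ defined by $$x_1^2-x_2^2=x_3^2,\qquad x_0^2-x_1^2=x_4^2,\qquad x_0^2-x_2^2=x_5^2,$$ and let $X\subset\mathbb{A}^3$ be the affine surface over $\mathbb{F}_p$ given by $z^2=(x^2y^2+1)(x^2+y^2)$. Then $S$ is birationally isomorphic to $X$ over $\mathbb{F}_p$. Moreover, there is an isomorphism (of varieties over $\mathbb{F}_p$) between $S\setminus D$ and $X\setminus D_1$, where $D=S\cap\{x_1x_5=0\}$ and $D_1=X\cap\{xyz=0\}$. *)

theory Defs
  imports "HOL-Computational_Algebra.Polynomial"
begin

definition alg_closed :: "'k::field itself \<Rightarrow> bool" where
  "alg_closed _ \<longleftrightarrow> (\<forall>q::'k poly. degree q \<ge> 1 \<longrightarrow> (\<exists>x. poly q x = 0))"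

text \<open>Polynomial expressions in variables X_0, X_1, ... with integer coefficients;
  in a field of characteristic p the integer constants are exactly the elements of F_p,
  so these are the polynomials with coefficients in F_p.\<close>

datatype mpoly = Var nat | Const int | Add mpoly mpoly | Mul mpoly mpoly

fun ev :: "(nat \<Rightarrow> 'k::field) \<Rightarrow> mpoly \<Rightarrow> 'k" where
  "ev x (Var i) = x i"
| "ev x (Const c) = of_int c"
| "ev x (Add P Q) = ev x P + ev x Q"
| "ev x (Mul P Q) = ev x P * ev x Q"

definition homog :: "nat \<Rightarrow> mpoly \<Rightarrow> 'k::field itself \<Rightarrow> bool" where
  "homog d P _ \<longleftrightarrow> (\<forall>(c::'k) x. ev (\<lambda>i. c * x i) P = c ^ d * ev x P)"

text \<open>Points of P^5 are represented by nonzero vectors (coordinates 0..5, others 0)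
  up to scaling; points of A^3 by vectors with coordinates 0,1,2 = x,y,z.\<close>

definition proj_eq :: "(nat \<Rightarrow> 'k::field) \<Rightarrow> (nat \<Rightarrow> 'k) \<Rightarrow> bool" where
  "proj_eq u v \<longleftrightarrow> (\<exists>c. c \<noteq> 0 \<and> u = (\<lambda>i. c * v i))"

definition S_cone :: "(nat \<Rightarrow> 'k::field) set" where
  "S_cone = {x. (\<forall>i>5. x i = 0) \<and> (\<exists>i\<le>5. x i \<noteq> 0) \<and>
     (x 1)^2 - (x 2)^2 = (x 3)^2 \<and> (x 0)^2 - (x 1)^2 = (x 4)^2 \<and> (x 0)^2 - (x 2)^2 = (x 5)^2}"

definition S_minus_D :: "(nat \<Rightarrow> 'k::field) set" where
  "S_minus_D = {x \<in> S_cone. x 1 * x 5 \<noteq> 0}"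

definition X_pts :: "(nat \<Rightarrow> 'k::field) set" where
  "X_pts = {v. (\<forall>i>2. v i = 0) \<and>
     (v 2)^2 = ((v 0)^2 * (v 1)^2 + 1) * ((v 0)^2 + (v 1)^2)}"

definition X_minus_D1 :: "(nat \<Rightarrow> 'k::field) set" where
  "X_minus_D1 = {v \<in> X_pts. v 0 * v 1 * v 2 \<noteq> 0}"

definition proj_open :: "(nat \<Rightarrow> 'k::field) set \<Rightarrow> (nat \<Rightarrow> 'k) set \<Rightarrow> bool" where
  "proj_open A U \<longleftrightarrow> U \<subseteq> A \<and> (\<forall>a\<in>U. \<exists>d Q. homog d Q TYPE('k) \<and> ev a Q \<noteq> 0 \<and>
      {b\<in>A. ev b Q \<noteq> 0} \<subseteq> U)"

definition proj_dense :: "(nat \<Rightarrow> 'k::field) set \<Rightarrow> (nat \<Rightarrow> 'k) set \<Rightarrow> bool" where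
  "proj_dense A U \<longleftrightarrow> (\<forall>d Q. homog d Q TYPE('k) \<longrightarrow> (\<exists>b\<in>A. ev b Q \<noteq> 0) \<longrightarrow>
      (\<exists>b\<in>U. ev b Q \<noteq> 0))"

definition aff_open :: "(nat \<Rightarrow> 'k::field) set \<Rightarrow> (nat \<Rightarrow> 'k) set \<Rightarrow> bool" where
  "aff_open A V \<longleftrightarrow> V \<subseteq> A \<and> (\<forall>a\<in>V. \<exists>Q. ev a Q \<noteq> 0 \<and> {b\<in>A. ev b Q \<noteq> 0} \<subseteq> V)"

definition aff_dense :: "(nat \<Rightarrow> 'k::field) set \<Rightarrow> (nat \<Rightarrow> 'k) set \<Rightarrow> bool" where
  "aff_dense A V \<longleftrightarrow> (\<forall>Q. (\<exists>b\<in>A. ev b Q \<noteq> 0) \<longrightarrow> (\<exists>b\<in>V. ev b Q \<noteq> 0))"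

definition reg_proj_to_aff ::
  "(nat \<Rightarrow> 'k::field) set \<Rightarrow> ((nat \<Rightarrow> 'k) \<Rightarrow> (nat \<Rightarrow> 'k)) \<Rightarrow> bool" where
  "reg_proj_to_aff U f \<longleftrightarrow>
     (\<forall>a\<in>U. \<forall>b\<in>U. proj_eq a b \<longrightarrow> f a = f b) \<and>
     (\<forall>a\<in>U. \<exists>d Q P. homog d Q TYPE('k) \<and> (\<forall>i<3. homog d (P i) TYPE('k)) \<and> ev a Q \<noteq> 0 \<and>
        (\<forall>b\<in>U. ev b Q \<noteq> 0 \<longrightarrow>
            f b = (\<lambda>i. if i < 3 then ev b (P i) / ev b Q else 0)))"

definition reg_aff_to_proj ::
  "(nat \<Rightarrow> 'k::field) set \<Rightarrow> ((nat \<Rightarrow> 'k) \<Rightarrow> (nat \<Rightarrow> 'k)) \<Rightarrow> bool" where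
  "reg_aff_to_proj V g \<longleftrightarrow>
     (\<forall>a\<in>V. \<exists>Q P. ev a Q \<noteq> 0 \<and>
        (\<forall>b\<in>V. ev b Q \<noteq> 0 \<longrightarrow> (\<exists>i\<le>5. ev b (P i) \<noteq> 0) \<and>
            proj_eq (g b) (\<lambda>i. if i \<le> 5 then ev b (P i) else 0)))"

definition isomorphic_over_Fp ::
  "(nat \<Rightarrow> 'k::field) set \<Rightarrow> (nat \<Rightarrow> 'k) set \<Rightarrow> bool" where
  "isomorphic_over_Fp U V \<longleftrightarrow> (\<exists>f g.
     reg_proj_to_aff U f \<and> reg_aff_to_proj V g \<and> f ` U \<subseteq> V \<and> g ` V \<subseteq> U \<and>
     (\<forall>b\<in>V. f (g b) = b) \<and> (\<forall>a\<in>U. proj_eq (g (f a)) a))"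

definition birational_over_Fp ::
  "(nat \<Rightarrow> 'k::field) set \<Rightarrow> (nat \<Rightarrow> 'k) set \<Rightarrow> bool" where
  "birational_over_Fp A B \<longleftrightarrow> (\<exists>U V. proj_open A U \<and> proj_dense A U \<and>
      aff_open B V \<and> aff_dense B V \<and> isomorphic_over_Fp U V)"

end

theory Submission
  imports Defs "HOL-Number_Theory.Euler_Criterion"
begin

(* Let \<iota> be an integer with \<iota>^2 = -1 mod p; it exists by Euler's criterion since p = 1 mod 4.
   The maps
     (x_0 : ... : x_5)  |->  (x, y, 2 x_5 x y / x_1),   x = (x_3 - \<iota> x_2) / x_1,  y = (x_0 + x_4) / x_1,
     (x, y, z)  |->  (x (y^2 + 1) : 2 x y : \<iota> y (x^2 - 1) : y (x^2 + 1) : x (y^2 - 1) : z)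
   are defined over F_p and mutually inverse between S - D and X - D1: on S one has
   x + 1/x = 2 x_3/x_1, \<iota> (x - 1/x) = 2 x_2/x_1, y + 1/y = 2 x_0/x_1 and y - 1/y = 2 x_4/x_1,
   and every identity needed follows from these.
   Birationality then only needs S - D and X - D1 to be Zariski dense. Both surfaces arise from an
   affine space by successively adjoining square roots of polynomials, and the nonvanishing locus of a
   polynomial G stays dense when a square root of a polynomial F without zeros on that locus is
   adjoined. *)

section \<open>Square roots in the base field\<close>

lemma prime_1_mod_4_sqrt_minus_one:
  fixes p :: nat
  assumes "prime p" and "p mod 4 = 1"
  shows "\<exists>c::int. [c^2 = -1] (mod int p)"
proof -
  have p_gt_2: "2 < p"
    using assms prime_ge_2_nat[OF assms(1)] by (cases "p = 2") auto
  have "even ((p - 1) div 2)"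
    using assms(2) by presburger
  then have Legendre: "[Legendre (-1) (int p) = 1] (mod int p)"
    using euler_criterion[OF assms(1) p_gt_2, of "-1"] by simp
  have "QuadRes (int p) (-1)"
  proof (rule ccontr)
    assume "\<not> QuadRes (int p) (-1)"
    moreover have "\<not> [-1 = 0] (mod int p)"
      using p_gt_2 by (simp add: cong_def zmod_minus1)
    ultimately have "[-1 = 1] (mod int p)"
      using Legendre by (simp add: Legendre_def)
    then have "int p dvd 2"
      by (simp add: cong_iff_dvd_diff)
    then show False
      using p_gt_2 zdvd_imp_le[of "int p" 2] by simp
  qed
  then show ?thesis
    unfolding QuadRes_def by blast
qed

lemma sqrt_minus_one_in_prime_field:
  fixes p :: nat
  assumes "prime p" and "p mod 4 = 1" and "CHAR('k::field) = p"
  shows "\<exists>c::int. of_int c * of_int c = (-1::'k)"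
proof -
  obtain c :: int where "[c^2 = -1] (mod int p)"
    using prime_1_mod_4_sqrt_minus_one[OF assms(1,2)] by blast
  then have "int p dvd c^2 + 1"
    by (simp add: cong_iff_dvd_diff)
  then have "(of_int (c^2 + 1) :: 'k) = 0"
    by (subst of_int_eq_0_iff_char_dvd) (simp add: assms(3))
  then have "(of_int c * of_int c :: 'k) = -1"
    by (simp add: power2_eq_square eq_neg_iff_add_eq_0)
  then show ?thesis by blast
qed

lemma two_nonzero_if_char_1_mod_4:
  fixes p :: nat
  assumes "prime p" and "p mod 4 = 1" and "CHAR('k::field) = p"
  shows "(2::'k) \<noteq> 0"
proof -
  have "p \<noteq> 2"
    using assms(2) by auto
  then have "\<not> p dvd 2"
    using assms(1) two_is_prime_nat primes_dvd_imp_eq by blast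
  then show ?thesis
    using of_nat_eq_0_iff_char_dvd[of 2, where 'a = 'k] assms(3) by simp
qed

lemma alg_closed_infinite:
  assumes "alg_closed TYPE('k::field)"
  shows "infinite (UNIV :: 'k set)"
proof
  assume fin: "finite (UNIV :: 'k set)"
  define r :: "'k poly" where "r = (\<Prod>a\<in>UNIV. [:-a, 1:])"
  have "degree r = card (UNIV :: 'k set)"
    unfolding r_def by (subst degree_prod_sum_eq) auto
  moreover have "card (UNIV :: 'k set) \<ge> 1"
    using fin by (simp add: Suc_le_eq finite_UNIV_card_ge_0)
  ultimately have "degree (r + 1) \<ge> 1"
    by (subst degree_add_eq_left) auto
  then obtain x where "poly (r + 1) x = 0"
    using assms unfolding alg_closed_def by blast
  moreover have "poly r x = 0"
    unfolding r_def poly_prod using fin by simp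
  ultimately show False by simp
qed

lemma alg_closed_ex_sqrt:
  assumes "alg_closed TYPE('k::field)"
  shows "\<exists>r. r * r = (a::'k)"
proof -
  have "degree [:-a, 0, 1:] \<ge> 1" by simp
  then obtain x where "poly [:-a, 0, 1:] x = 0"
    using assms unfolding alg_closed_def by blast
  then show ?thesis by (auto simp: algebra_simps)
qed

section \<open>Zariski density of nonvanishing loci\<close>

fun vars :: "mpoly \<Rightarrow> nat set" where
  "vars (Var i) = {i}"
| "vars (Const c) = {}"
| "vars (Add P Q) = vars P \<union> vars Q"
| "vars (Mul P Q) = vars P \<union> vars Q"

lemma ev_upd_notin_vars: "j \<notin> vars P \<Longrightarrow> ev (x(j := v)) P = ev x P"
  by (induction P) auto

lemma ev_on_line:
  fixes c a :: "nat \<Rightarrow> 'k::field"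
  shows "\<exists>q::'k poly. \<forall>t. ev (\<lambda>i. c i + t * (a i - c i)) P = poly q t"
proof (induction P)
  case (Var i)
  show ?case by (rule exI[of _ "[:c i, a i - c i:]"]) (simp add: algebra_simps)
next
  case (Const d)
  show ?case by (rule exI[of _ "[:of_int d:]"]) simp
next
  case (Add P Q)
  then obtain p q where "\<forall>t. ev (\<lambda>i. c i + t * (a i - c i)) P = poly p t"
    and "\<forall>t. ev (\<lambda>i. c i + t * (a i - c i)) Q = poly q t" by blast
  then show ?case by (intro exI[of _ "p + q"]) simp
next
  case (Mul P Q)
  then obtain p q where "\<forall>t. ev (\<lambda>i. c i + t * (a i - c i)) P = poly p t"
    and "\<forall>t. ev (\<lambda>i. c i + t * (a i - c i)) Q = poly q t" by blast
  then show ?case by (intro exI[of _ "p * q"]) simp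
qed

fun reduce_sq :: "nat \<Rightarrow> mpoly \<Rightarrow> mpoly \<Rightarrow> mpoly \<times> mpoly" where
  "reduce_sq j F (Var i) = (if i = j then (Const 0, Const 1) else (Var i, Const 0))"
| "reduce_sq j F (Const c) = (Const c, Const 0)"
| "reduce_sq j F (Add P Q) =
     (let (A1, B1) = reduce_sq j F P; (A2, B2) = reduce_sq j F Q in (Add A1 A2, Add B1 B2))"
| "reduce_sq j F (Mul P Q) =
     (let (A1, B1) = reduce_sq j F P; (A2, B2) = reduce_sq j F Q
      in (Add (Mul A1 A2) (Mul F (Mul B1 B2)), Add (Mul A1 B2) (Mul B1 A2)))"

lemma vars_reduce_sq:
  assumes "j \<notin> vars F"
  shows "j \<notin> vars (fst (reduce_sq j F P)) \<and> j \<notin> vars (snd (reduce_sq j F P))"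
  using assms by (induction P) (auto split: prod.splits)

lemma ev_reduce_sq:
  fixes x :: "nat \<Rightarrow> 'k::field"
  assumes "(x j)^2 = ev x F"
  shows "ev x P = ev x (fst (reduce_sq j F P)) + x j * ev x (snd (reduce_sq j F P))"
  using assms by (induction P) (auto split: prod.splits simp: algebra_simps power2_eq_square)

definition zariski_dense :: "(nat \<Rightarrow> 'k::field) set \<Rightarrow> (nat \<Rightarrow> 'k) set \<Rightarrow> bool" where
  "zariski_dense W U \<longleftrightarrow> (\<forall>P. (\<forall>x\<in>U. ev x P = 0) \<longrightarrow> (\<forall>x\<in>W. ev x P = 0))"

lemma zariski_dense_mono:
  "zariski_dense W U \<Longrightarrow> W' \<subseteq> W \<Longrightarrow> U \<subseteq> U' \<Longrightarrow> zariski_dense W' U'"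
  unfolding zariski_dense_def by blast

lemma aff_dense_if_zariski_dense: "zariski_dense A V \<Longrightarrow> aff_dense A V"
  unfolding zariski_dense_def aff_dense_def by blast

lemma proj_dense_if_zariski_dense: "zariski_dense A U \<Longrightarrow> proj_dense A U"
  unfolding zariski_dense_def proj_dense_def by blast

text \<open>A nonzero polynomial on a line has finitely many zeros, and the field is infinite.\<close>

lemma zariski_dense_nonzero_affine:
  fixes W :: "(nat \<Rightarrow> 'k::field) set"
  assumes inf: "infinite (UNIV :: 'k set)"
    and line: "\<And>c a t. c \<in> W \<Longrightarrow> a \<in> W \<Longrightarrow> (\<lambda>i. c i + t * (a i - c i)) \<in> W"
    and a: "a \<in> W" "ev a G \<noteq> 0"
  shows "zariski_dense W {x\<in>W. ev x G \<noteq> 0}"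
  unfolding zariski_dense_def
proof (intro allI impI ballI, rule ccontr)
  fix P c
  assume vanish: "\<forall>x\<in>{x\<in>W. ev x G \<noteq> 0}. ev x P = 0" and c: "c \<in> W" "ev c P \<noteq> 0"
  obtain p where p: "\<And>t. ev (\<lambda>i. c i + t * (a i - c i)) P = poly p t"
    using ev_on_line by blast
  obtain g where g: "\<And>t. ev (\<lambda>i. c i + t * (a i - c i)) G = poly g t"
    using ev_on_line by blast
  have "poly p 0 \<noteq> 0" "poly g 1 \<noteq> 0"
    using p[of 0] g[of 1] c a by simp_all
  then have "p * g \<noteq> 0" by auto
  then have "finite {t. poly (p * g) t = 0}"
    by (rule poly_roots_finite)
  then obtain t where "poly (p * g) t \<noteq> 0"
    using ex_new_if_finite[OF inf] by blast
  then show False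
    using vanish line[OF c(1) a(1), of t] p[of t] g[of t] by auto
qed

definition adjoin_sqrt :: "nat \<Rightarrow> mpoly \<Rightarrow> (nat \<Rightarrow> 'k::field) set \<Rightarrow> (nat \<Rightarrow> 'k) set" where
  "adjoin_sqrt j F W = {x\<in>W. (x j)^2 = ev x F}"

lemma adjoin_sqrt_upd:
  assumes "k \<noteq> j" "k \<notin> vars F" "\<And>x v. x \<in> W \<Longrightarrow> x(k := v) \<in> W"
    and "x \<in> adjoin_sqrt j F W"
  shows "x(k := v) \<in> adjoin_sqrt j F W"
  using assms by (simp add: adjoin_sqrt_def ev_upd_notin_vars)

text \<open>Modulo \<open>x\<^sub>j\<^sup>2 = F\<close> a polynomial vanishing on the new locus is \<open>A + x\<^sub>j B\<close> with
  \<open>A\<close>, \<open>B\<close> free of \<open>x\<^sub>j\<close>; evaluating at both square roots \<open>\<plusminus>r\<close> of \<open>F \<noteq> 0\<close>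
  shows that \<open>A\<close> and \<open>B\<close> vanish on the old locus.\<close>

lemma zariski_dense_nonzero_adjoin_sqrt:
  fixes W :: "(nat \<Rightarrow> 'k::field) set"
  assumes dense: "zariski_dense W {x\<in>W. ev x G \<noteq> 0}"
    and upd: "\<And>x v. x \<in> W \<Longrightarrow> x(j := v) \<in> W"
    and G_free: "j \<notin> vars G" and F_free: "j \<notin> vars F"
    and F_nonzero: "\<And>x. x \<in> W \<Longrightarrow> ev x G \<noteq> 0 \<Longrightarrow> ev x F \<noteq> 0"
    and two: "(2::'k) \<noteq> 0" and sqrt: "\<And>a::'k. \<exists>r. r * r = a"
  shows "zariski_dense (adjoin_sqrt j F W) {x\<in>adjoin_sqrt j F W. ev x G \<noteq> 0}"
  unfolding zariski_dense_def
proof (intro allI impI ballI)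
  fix P y
  assume vanish: "\<forall>x\<in>{x\<in>adjoin_sqrt j F W. ev x G \<noteq> 0}. ev x P = 0"
    and y: "y \<in> adjoin_sqrt j F W"
  define A where "A = fst (reduce_sq j F P)"
  define B where "B = snd (reduce_sq j F P)"
  have A_free: "j \<notin> vars A" and B_free: "j \<notin> vars B"
    using vars_reduce_sq[OF F_free] unfolding A_def B_def by auto
  have AB_vanish: "ev x A = 0 \<and> ev x B = 0" if x: "x \<in> W" "ev x G \<noteq> 0" for x
  proof -
    have at_root: "ev x A + s * ev x B = 0" if s: "s * s = ev x F" for s
    proof -
      have s': "((x(j := s)) j)^2 = ev (x(j := s)) F"
        using s by (simp add: ev_upd_notin_vars[OF F_free] power2_eq_square)
      then have "x(j := s) \<in> adjoin_sqrt j F W"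
        using upd[OF x(1)] by (simp add: adjoin_sqrt_def)
      then have "ev (x(j := s)) P = 0"
        using vanish x(2) by (simp add: ev_upd_notin_vars[OF G_free])
      moreover have "ev (x(j := s)) P = ev x A + s * ev x B"
        using ev_reduce_sq[OF s', of P] ev_upd_notin_vars[OF A_free] ev_upd_notin_vars[OF B_free]
        unfolding A_def B_def by (metis fun_upd_same)
      ultimately show ?thesis by simp
    qed
    obtain r where r: "r * r = ev x F" using sqrt by blast
    with F_nonzero[OF x] have "r \<noteq> 0" by auto
    moreover have plus: "ev x A + r * ev x B = 0" and minus: "ev x A - r * ev x B = 0"
      using at_root[of r] at_root[of "-r"] r by simp_all
    then have "2 * ev x A = 0"
      by (metis add_diff_add add_diff_cancel_right' diff_self mult_2)
    with two have "ev x A = 0" by simp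
    ultimately show ?thesis
      using plus by simp
  qed
  have "\<forall>x\<in>W. ev x A = 0" "\<forall>x\<in>W. ev x B = 0"
    using dense AB_vanish unfolding zariski_dense_def by blast+
  then show "ev y P = 0"
    using y ev_reduce_sq[of y j F P] unfolding adjoin_sqrt_def A_def B_def by auto
qed

abbreviation Sub :: "mpoly \<Rightarrow> mpoly \<Rightarrow> mpoly" where
  "Sub P Q \<equiv> Add P (Mul (Const (-1)) Q)"

abbreviation Sq :: "mpoly \<Rightarrow> mpoly" where
  "Sq P \<equiv> Mul P P"

lemma zariski_dense_S_minus_D:
  fixes \<iota> :: "'k::field"
  assumes \<iota>: "\<iota> * \<iota> = -1" and two: "(2::'k) \<noteq> 0" and inf: "infinite (UNIV :: 'k set)"
    and sqrt: "\<And>a::'k. \<exists>r. r * r = a"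
  shows "zariski_dense (S_cone :: (nat \<Rightarrow> 'k) set) S_minus_D"
proof -
  define F3 where "F3 = Sub (Sq (Var 1)) (Sq (Var 2))"
  define F4 where "F4 = Sub (Sq (Var 0)) (Sq (Var 1))"
  define F5 where "F5 = Sub (Sq (Var 0)) (Sq (Var 2))"
  define G where "G = Mul (Var 1) (Mul F3 (Mul F4 F5))"
  define W0 :: "(nat \<Rightarrow> 'k) set" where "W0 = {x. \<forall>i>5. x i = 0}"
  define W where "W = adjoin_sqrt 5 F5 (adjoin_sqrt 4 F4 (adjoin_sqrt 3 F3 W0))"
  have ev_F: "ev x F3 = (x 1)^2 - (x 2)^2" "ev x F4 = (x 0)^2 - (x 1)^2"
    "ev x F5 = (x 0)^2 - (x 2)^2" for x :: "nat \<Rightarrow> 'k"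
    by (simp_all add: F3_def F4_def F5_def power2_eq_square)
  have "zariski_dense W0 {x\<in>W0. ev x G \<noteq> 0}"
  proof (rule zariski_dense_nonzero_affine[OF inf])
    show "(\<lambda>i. c i + t * (a i - c i)) \<in> W0" if "c \<in> W0" "a \<in> W0" for c a t
      using that by (simp add: W0_def)
    show "(\<lambda>i. 0)(1 := 1, 2 := \<iota>) \<in> W0" by (simp add: W0_def)
    show "ev ((\<lambda>i. 0)(1 := 1, 2 := \<iota>)) G \<noteq> 0"
      using \<iota> two by (simp add: G_def ev_F power2_eq_square)
  qed
  then have "zariski_dense W {x\<in>W. ev x G \<noteq> 0}"
    unfolding W_def
    by (intro zariski_dense_nonzero_adjoin_sqrt adjoin_sqrt_upd two sqrt)
      (auto simp: W0_def G_def F3_def F4_def F5_def adjoin_sqrt_def ev_F)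
  moreover have "S_cone \<subseteq> W"
    by (auto simp: S_cone_def W_def W0_def adjoin_sqrt_def ev_F)
  moreover have "{x\<in>W. ev x G \<noteq> 0} \<subseteq> S_minus_D"
    by (auto simp: S_minus_D_def S_cone_def W_def W0_def adjoin_sqrt_def G_def ev_F)
  ultimately show ?thesis by (rule zariski_dense_mono)
qed

lemma zariski_dense_X_minus_D1:
  assumes two: "(2::'k::field) \<noteq> 0" and inf: "infinite (UNIV :: 'k set)"
    and sqrt: "\<And>a::'k. \<exists>r. r * r = a"
  shows "zariski_dense (X_pts :: (nat \<Rightarrow> 'k) set) X_minus_D1"
proof -
  define F where
    "F = Mul (Add (Mul (Sq (Var 0)) (Sq (Var 1))) (Const 1)) (Add (Sq (Var 0)) (Sq (Var 1)))"
  define G where "G = Mul (Var 0) (Mul (Var 1) F)"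
  define W0 :: "(nat \<Rightarrow> 'k) set" where "W0 = {x. \<forall>i>2. x i = 0}"
  have ev_F: "ev x F = ((x 0)^2 * (x 1)^2 + 1) * ((x 0)^2 + (x 1)^2)" for x :: "nat \<Rightarrow> 'k"
    by (simp add: F_def power2_eq_square)
  have "zariski_dense W0 {x\<in>W0. ev x G \<noteq> 0}"
  proof (rule zariski_dense_nonzero_affine[OF inf])
    show "(\<lambda>i. c i + t * (a i - c i)) \<in> W0" if "c \<in> W0" "a \<in> W0" for c a t
      using that by (simp add: W0_def)
    show "(\<lambda>i. 0::'k)(0 := 1, 1 := 1) \<in> W0" by (simp add: W0_def)
    have "(2::'k) * 2 \<noteq> 0" by (rule no_zero_divisors[OF two two])
    then show "ev ((\<lambda>i. 0::'k)(0 := 1, 1 := 1)) G \<noteq> 0"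
      by (simp add: G_def ev_F)
  qed
  then have "zariski_dense (adjoin_sqrt 2 F W0) {x\<in>adjoin_sqrt 2 F W0. ev x G \<noteq> 0}"
    by (intro zariski_dense_nonzero_adjoin_sqrt two sqrt) (auto simp: W0_def G_def F_def)
  moreover have "X_pts = adjoin_sqrt 2 F W0"
    by (auto simp: X_pts_def W0_def adjoin_sqrt_def ev_F)
  ultimately have "zariski_dense (X_pts :: (nat \<Rightarrow> 'k) set) {x\<in>X_pts. ev x G \<noteq> 0}"
    by simp
  moreover have "{x\<in>X_pts. ev x G \<noteq> 0} \<subseteq> (X_minus_D1 :: (nat \<Rightarrow> 'k) set)"
    by (auto simp: X_minus_D1_def X_pts_def G_def ev_F)
  ultimately show ?thesis by (rule zariski_dense_mono[OF _ order_refl])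
qed

lemma proj_open_S_minus_D: "proj_open S_cone S_minus_D"
  unfolding proj_open_def
proof (intro conjI ballI)
  show "S_minus_D \<subseteq> S_cone" by (auto simp: S_minus_D_def)
  fix a :: "nat \<Rightarrow> 'a"
  assume "a \<in> S_minus_D"
  moreover have "homog 2 (Mul (Var 1) (Var 5)) TYPE('a)"
    by (simp add: homog_def power2_eq_square algebra_simps)
  ultimately show "\<exists>d Q. homog d Q TYPE('a) \<and> ev a Q \<noteq> 0 \<and> {b\<in>S_cone. ev b Q \<noteq> 0} \<subseteq> S_minus_D"
    by (intro exI[of _ 2] exI[of _ "Mul (Var 1) (Var 5)"]) (auto simp: S_minus_D_def)
qed

lemma aff_open_X_minus_D1: "aff_open X_pts X_minus_D1"
  unfolding aff_open_def
proof (intro conjI ballI)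
  show "X_minus_D1 \<subseteq> X_pts" by (auto simp: X_minus_D1_def)
  fix a :: "nat \<Rightarrow> 'a"
  assume "a \<in> X_minus_D1"
  then show "\<exists>Q. ev a Q \<noteq> 0 \<and> {b\<in>X_pts. ev b Q \<noteq> 0} \<subseteq> X_minus_D1"
    by (intro exI[of _ "Mul (Mul (Var 0) (Var 1)) (Var 2)"]) (auto simp: X_minus_D1_def)
qed

section \<open>The isomorphism\<close>

definition coords :: "'k::zero list \<Rightarrow> nat \<Rightarrow> 'k" where
  "coords xs i = (if i < length xs then xs ! i else 0)"

lemma coords_map_upt: "(\<forall>i\<ge>n. a i = 0) \<Longrightarrow> coords (map a [0..<n]) = a"
  by (auto simp: fun_eq_iff coords_def)

lemma proj_eq_coords_scale:
  "(c::'k::field) \<noteq> 0 \<Longrightarrow> proj_eq (coords (map ((*) c) xs)) (coords xs)"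
  unfolding proj_eq_def by (auto simp: fun_eq_iff coords_def)

definition S_to_X :: "'k::field \<Rightarrow> (nat \<Rightarrow> 'k) \<Rightarrow> nat \<Rightarrow> 'k" where
  "S_to_X \<iota> a =
     (let x = (a 3 - \<iota> * a 2) / a 1; y = (a 0 + a 4) / a 1 in coords [x, y, 2 * a 5 * x * y / a 1])"

definition X_to_S :: "'k::field \<Rightarrow> (nat \<Rightarrow> 'k) \<Rightarrow> nat \<Rightarrow> 'k" where
  "X_to_S \<iota> v =
     (let x = v 0; y = v 1 in
      coords [x * (y^2 + 1), 2 * x * y, \<iota> * y * (x^2 - 1), y * (x^2 + 1), x * (y^2 - 1), v 2])"

lemma S_to_X_identities:
  fixes \<iota> a0 a1 a2 a3 a4 :: "'k::field"
  assumes \<iota>: "\<iota> * \<iota> = -1" and S: "a1^2 - a2^2 = a3^2" "a0^2 - a1^2 = a4^2" and a1: "a1 \<noteq> 0"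
  defines "x \<equiv> (a3 - \<iota> * a2) / a1" and "y \<equiv> (a0 + a4) / a1"
  shows "a1 * (x^2 + 1) = 2 * a3 * x" "\<iota> * a1 * (x^2 - 1) = 2 * a2 * x"
    and "a1 * (y^2 + 1) = 2 * a0 * y" "a1 * (y^2 - 1) = 2 * a4 * y"
  using a1 unfolding x_def y_def
  by (simp_all add: field_simps) (use \<iota> S in Groebner_Basis.algebra)+

lemma S_to_X_mem:
  fixes \<iota> :: "'k::field"
  assumes \<iota>: "\<iota> * \<iota> = -1" and two: "(2::'k) \<noteq> 0" and a: "a \<in> S_minus_D"
  shows "S_to_X \<iota> a \<in> X_minus_D1"
proof -
  have a1: "a 1 \<noteq> 0" and a5: "a 5 \<noteq> 0" and S: "(a 1)^2 - (a 2)^2 = (a 3)^2"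
    "(a 0)^2 - (a 1)^2 = (a 4)^2" "(a 0)^2 - (a 2)^2 = (a 5)^2"
    using a by (auto simp: S_minus_D_def S_cone_def)
  define x where "x = (a 3 - \<iota> * a 2) / a 1"
  define y where "y = (a 0 + a 4) / a 1"
  define z where "z = 2 * a 5 * x * y / a 1"
  note ids = S_to_X_identities[OF \<iota> S(1,2) a1, folded x_def y_def]
  have "x \<noteq> 0" "y \<noteq> 0"
    using ids(1,3) a1 by auto
  then have nonzero: "x * y * z \<noteq> 0"
    using a1 a5 two by (simp add: z_def)
  have "(a 1 * z)^2 = 4 * ((a 0)^2 - (a 2)^2) * x^2 * y^2"
    using a1 S(3) by (simp add: z_def power_mult_distrib)
  also have "\<dots> = x^2 * (2 * a 0 * y)^2 - y^2 * (2 * a 2 * x)^2"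
    by (simp add: algebra_simps)
  also have "\<dots> = x^2 * (a 1 * (y^2 + 1))^2 - y^2 * (\<iota> * a 1 * (x^2 - 1))^2"
    by (simp only: ids)
  also have "\<dots> = x^2 * (a 1 * (y^2 + 1))^2 + y^2 * (a 1 * (x^2 - 1))^2"
    using \<iota> by (simp add: power_mult_distrib power2_eq_square[of \<iota>])
  also have "\<dots> = (a 1)^2 * ((x^2 * y^2 + 1) * (x^2 + y^2))"
    by Groebner_Basis.algebra
  finally have "(a 1)^2 * z^2 = (a 1)^2 * ((x^2 * y^2 + 1) * (x^2 + y^2))"
    by (simp only: power_mult_distrib)
  then have "z^2 = (x^2 * y^2 + 1) * (x^2 + y^2)"
    using a1 by simp
  moreover have "S_to_X \<iota> a = coords [x, y, z]"
    unfolding S_to_X_def Let_def x_def y_def z_def ..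
  ultimately show ?thesis
    using nonzero by (simp add: X_minus_D1_def X_pts_def coords_def)
qed

lemma X_to_S_equations:
  fixes \<iota> x y z :: "'k::field"
  assumes "\<iota> * \<iota> = -1" and "z^2 = (x^2 * y^2 + 1) * (x^2 + y^2)"
  shows "(2 * x * y)^2 - (\<iota> * y * (x^2 - 1))^2 = (y * (x^2 + 1))^2"
    and "(x * (y^2 + 1))^2 - (2 * x * y)^2 = (x * (y^2 - 1))^2"
    and "(x * (y^2 + 1))^2 - (\<iota> * y * (x^2 - 1))^2 = z^2"
  using assms by - Groebner_Basis.algebra+

lemma X_to_S_apply:
  "X_to_S \<iota> v 0 = v 0 * ((v 1)^2 + 1)" "X_to_S \<iota> v 1 = 2 * v 0 * v 1"
  "X_to_S \<iota> v 2 = \<iota> * v 1 * ((v 0)^2 - 1)" "X_to_S \<iota> v 3 = v 1 * ((v 0)^2 + 1)"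
  "X_to_S \<iota> v 4 = v 0 * ((v 1)^2 - 1)" "X_to_S \<iota> v 5 = v 2" "i > 5 \<Longrightarrow> X_to_S \<iota> v i = 0"
  by (simp_all add: X_to_S_def Let_def coords_def)

lemma X_to_S_mem:
  fixes \<iota> :: "'k::field"
  assumes \<iota>: "\<iota> * \<iota> = -1" and two: "(2::'k) \<noteq> 0" and v: "v \<in> X_minus_D1"
  shows "X_to_S \<iota> v \<in> S_minus_D"
proof -
  have nonzero: "v 0 \<noteq> 0" "v 1 \<noteq> 0" "v 2 \<noteq> 0"
    and X: "(v 2)^2 = ((v 0)^2 * (v 1)^2 + 1) * ((v 0)^2 + (v 1)^2)"
    using v by (auto simp: X_minus_D1_def X_pts_def)
  show ?thesis
    unfolding S_minus_D_def S_cone_def mem_Collect_eq X_to_S_apply(1-6)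
  proof (intro conjI)
    show "\<forall>i>5. X_to_S \<iota> v i = 0" using X_to_S_apply(7) by blast
    show "\<exists>i\<le>5. X_to_S \<iota> v i \<noteq> 0"
      using nonzero by (intro exI[of _ 5]) (simp add: X_to_S_apply(6))
    show "2 * v 0 * v 1 * v 2 \<noteq> 0" using nonzero two by simp
  qed (fact X_to_S_equations[OF \<iota> X])+
qed

lemma S_to_X_X_to_S:
  fixes \<iota> :: "'k::field"
  assumes \<iota>: "\<iota> * \<iota> = -1" and two: "(2::'k) \<noteq> 0" and v: "v \<in> X_minus_D1"
  shows "S_to_X \<iota> (X_to_S \<iota> v) = v"
proof -
  have nonzero: "v 0 \<noteq> 0" "v 1 \<noteq> 0" and v_upper: "\<forall>i\<ge>3. v i = 0"
    using v by (auto simp: X_minus_D1_def X_pts_def)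
  let ?X = "X_to_S \<iota> v"
  note X = X_to_S_apply(1-6)[of \<iota> v]
  have "?X 3 - \<iota> * ?X 2 = v 0 * ?X 1"
    unfolding X using \<iota> by Groebner_Basis.algebra
  moreover have "?X 0 + ?X 4 = v 1 * ?X 1"
    unfolding X by Groebner_Basis.algebra
  moreover have "?X 1 \<noteq> 0"
    using nonzero two unfolding X(2) by simp
  ultimately have "S_to_X \<iota> ?X = coords [v 0, v 1, 2 * ?X 5 * v 0 * v 1 / ?X 1]"
    by (simp add: S_to_X_def Let_def)
  also have "\<dots> = coords (map v [0..<3])"
    using \<open>?X 1 \<noteq> 0\<close> unfolding X by (simp add: numeral_eq_Suc)
  also have "\<dots> = v"
    by (rule coords_map_upt[OF v_upper])
  finally show ?thesis .
qed

lemma X_to_S_S_to_X: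
  fixes \<iota> :: "'k::field"
  assumes \<iota>: "\<iota> * \<iota> = -1" and two: "(2::'k) \<noteq> 0" and a: "a \<in> S_minus_D"
  shows "proj_eq (X_to_S \<iota> (S_to_X \<iota> a)) a"
proof -
  have a1: "a 1 \<noteq> 0" and a_upper: "\<forall>i\<ge>6. a i = 0" and S: "(a 1)^2 - (a 2)^2 = (a 3)^2"
    "(a 0)^2 - (a 1)^2 = (a 4)^2"
    using a by (auto simp: S_minus_D_def S_cone_def)
  define x where "x = (a 3 - \<iota> * a 2) / a 1"
  define y where "y = (a 0 + a 4) / a 1"
  define c where "c = 2 * x * y / a 1"
  note ids = S_to_X_identities[OF \<iota> S a1, folded x_def y_def]
  have c_a1: "c * a 1 = 2 * x * y"
    using a1 by (simp add: c_def)
  have "x \<noteq> 0" "y \<noteq> 0"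
    using ids(1,3) a1 by auto
  then have "c \<noteq> 0"
    using a1 two by (simp add: c_def)
  have "a 1 * (x * (y^2 + 1)) = a 1 * (c * a 0)"
    "a 1 * (\<iota> * y * (x^2 - 1)) = a 1 * (c * a 2)"
    "a 1 * (y * (x^2 + 1)) = a 1 * (c * a 3)"
    "a 1 * (x * (y^2 - 1)) = a 1 * (c * a 4)"
    using ids c_a1 by - Groebner_Basis.algebra+
  moreover have "S_to_X \<iota> a = coords [x, y, c * a 5]"
    unfolding S_to_X_def Let_def x_def y_def c_def by (simp add: algebra_simps)
  ultimately have image:
    "X_to_S \<iota> (S_to_X \<iota> a) = coords (map ((*) c) [a 0, a 1, a 2, a 3, a 4, a 5])"
    using a1 c_a1 by (simp add: X_to_S_def Let_def coords_def)
  have "coords [a 0, a 1, a 2, a 3, a 4, a 5] = a"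
    using coords_map_upt[OF a_upper] by (simp add: upt_conv_Cons numeral_eq_Suc)
  with proj_eq_coords_scale[OF \<open>c \<noteq> 0\<close>] show ?thesis
    unfolding image by metis
qed

lemma reg_proj_to_aff_S_to_X: "reg_proj_to_aff S_minus_D (S_to_X (of_int c :: 'k::field))"
proof -
  define A where "A = Sub (Var 3) (Mul (Const c) (Var 2))"
  define B where "B = Add (Var 0) (Var 4)"
  define Q where "Q = Mul (Var 1) (Sq (Var 1))"
  define Ps where
    "Ps = [Mul A (Sq (Var 1)), Mul B (Sq (Var 1)), Mul (Mul (Const 2) (Var 5)) (Mul A B)]"
  have homog_Q: "homog 3 Q TYPE('k)"
    by (simp add: homog_def Q_def power3_eq_cube algebra_simps)
  have homog_Ps: "\<forall>i<3. homog 3 (Ps ! i) TYPE('k)"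
    by (simp add: homog_def Ps_def A_def B_def power3_eq_cube algebra_simps less_Suc_eq numeral_eq_Suc)
  have Q: "ev a Q \<noteq> 0" if "a \<in> S_minus_D" for a :: "nat \<Rightarrow> 'k"
    using that by (simp add: Q_def S_minus_D_def)
  have chart: "S_to_X (of_int c) a = (\<lambda>i. if i < 3 then ev a (Ps ! i) / ev a Q else 0)"
    if "a \<in> S_minus_D" for a :: "nat \<Rightarrow> 'k"
  proof -
    have "(\<lambda>i. if i < 3 then ev a (Ps ! i) / ev a Q else 0) =
        coords (map (\<lambda>R. ev a R / ev a Q) Ps)"
      by (auto simp: fun_eq_iff coords_def Ps_def less_Suc_eq numeral_eq_Suc)
    also have "\<dots> = S_to_X (of_int c) a"
      unfolding S_to_X_def Let_def
      by (rule arg_cong[where f = coords])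
        (use Q[OF that] in \<open>simp add: Ps_def A_def B_def Q_def field_simps\<close>)
    finally show ?thesis ..
  qed
  have "S_to_X (of_int c) a = S_to_X (of_int c) b"
    if "a \<in> S_minus_D" "b \<in> S_minus_D" "proj_eq a b" for a b :: "nat \<Rightarrow> 'k"
  proof -
    obtain k where k: "k \<noteq> 0" "a = (\<lambda>i. k * b i)"
      using \<open>proj_eq a b\<close> unfolding proj_eq_def by blast
    then have "ev a (Ps ! i) / ev a Q = ev b (Ps ! i) / ev b Q" if "i < 3" for i
      using homog_Ps homog_Q that unfolding homog_def by simp
    then show ?thesis
      unfolding chart[OF that(1)] chart[OF that(2)] by (simp add: fun_eq_iff)
  qed
  then show ?thesis
    unfolding reg_proj_to_aff_def using homog_Q homog_Ps Q chart by blast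
qed

lemma reg_aff_to_proj_X_to_S: "reg_aff_to_proj X_minus_D1 (X_to_S (of_int c :: 'k::field))"
  unfolding reg_aff_to_proj_def
proof
  fix a :: "nat \<Rightarrow> 'k"
  assume "a \<in> X_minus_D1"
  define P where "P = (!) [Mul (Var 0) (Add (Sq (Var 1)) (Const 1)), Mul (Const 2) (Mul (Var 0) (Var 1)),
    Mul (Const c) (Mul (Var 1) (Sub (Sq (Var 0)) (Const 1))), Mul (Var 1) (Add (Sq (Var 0)) (Const 1)),
    Mul (Var 0) (Sub (Sq (Var 1)) (Const 1)), Var 2]"
  show "\<exists>Q P. ev a Q \<noteq> 0 \<and> (\<forall>b\<in>(X_minus_D1 :: (nat \<Rightarrow> 'k) set). ev b Q \<noteq> 0 \<longrightarrow>
      (\<exists>i\<le>5. ev b (P i) \<noteq> 0) \<and> proj_eq (X_to_S (of_int c) b) (\<lambda>i. if i \<le> 5 then ev b (P i) else 0))"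
  proof (intro exI[of _ "Const 1"] exI[of _ P] conjI ballI impI)
    fix b :: "nat \<Rightarrow> 'k"
    assume "b \<in> X_minus_D1" and "ev b (Const 1) \<noteq> 0"
    then show "\<exists>i\<le>5. ev b (P i) \<noteq> 0"
      by (intro exI[of _ 5]) (simp add: P_def X_minus_D1_def)
    have "(\<lambda>i. if i \<le> 5 then ev b (P i) else 0) = X_to_S (of_int c) b"
      by (auto simp: fun_eq_iff P_def X_to_S_def Let_def coords_def power2_eq_square
          le_Suc_eq numeral_eq_Suc)
    then show "proj_eq (X_to_S (of_int c) b) (\<lambda>i. if i \<le> 5 then ev b (P i) else 0)"
      unfolding proj_eq_def by (intro exI[of _ 1]) simp
  qed simp
qed

lemma isomorphic_S_minus_D_X_minus_D1:
  assumes \<iota>: "of_int c * of_int c = (-1::'k::field)" and two: "(2::'k) \<noteq> 0"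
  shows "isomorphic_over_Fp (S_minus_D :: (nat \<Rightarrow> 'k) set) X_minus_D1"
  unfolding isomorphic_over_Fp_def
proof (intro exI conjI)
  show "reg_proj_to_aff S_minus_D (S_to_X (of_int c :: 'k))"
    by (rule reg_proj_to_aff_S_to_X)
  show "reg_aff_to_proj X_minus_D1 (X_to_S (of_int c :: 'k))"
    by (rule reg_aff_to_proj_X_to_S)
  show "S_to_X (of_int c) ` S_minus_D \<subseteq> (X_minus_D1 :: (nat \<Rightarrow> 'k) set)"
    using S_to_X_mem[OF \<iota> two] by blast
  show "X_to_S (of_int c) ` X_minus_D1 \<subseteq> (S_minus_D :: (nat \<Rightarrow> 'k) set)"
    using X_to_S_mem[OF \<iota> two] by blast
  show "\<forall>v\<in>X_minus_D1. S_to_X (of_int c) (X_to_S (of_int c) v) = (v :: nat \<Rightarrow> 'k)"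
    using S_to_X_X_to_S[OF \<iota> two] by blast
  show "\<forall>a\<in>S_minus_D. proj_eq (X_to_S (of_int c) (S_to_X (of_int c) a)) (a :: nat \<Rightarrow> 'k)"
    using X_to_S_S_to_X[OF \<iota> two] by blast
qed

theorem lemma4p3:
  fixes p :: nat
  assumes "prime p" and "p mod 4 = 1"
    and "CHAR('k::field) = p" and "alg_closed TYPE('k)"
  shows "birational_over_Fp (S_cone :: (nat \<Rightarrow> 'k) set) X_pts
       \<and> isomorphic_over_Fp (S_minus_D :: (nat \<Rightarrow> 'k) set) X_minus_D1"
proof -
  obtain c :: int where \<iota>: "of_int c * of_int c = (-1::'k)"
    using sqrt_minus_one_in_prime_field[OF assms(1-3)] by blast
  have two: "(2::'k) \<noteq> 0"
    by (rule two_nonzero_if_char_1_mod_4[OF assms(1-3)])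
  have inf: "infinite (UNIV :: 'k set)"
    by (rule alg_closed_infinite[OF assms(4)])
  note sqrt = alg_closed_ex_sqrt[OF assms(4)]
  have iso: "isomorphic_over_Fp (S_minus_D :: (nat \<Rightarrow> 'k) set) X_minus_D1"
    by (rule isomorphic_S_minus_D_X_minus_D1[OF \<iota> two])
  moreover have "birational_over_Fp (S_cone :: (nat \<Rightarrow> 'k) set) X_pts"
    unfolding birational_over_Fp_def
    using proj_open_S_minus_D aff_open_X_minus_D1 iso
      proj_dense_if_zariski_dense[OF zariski_dense_S_minus_D[OF \<iota> two inf sqrt]]
      aff_dense_if_zariski_dense[OF zariski_dense_X_minus_D1[OF two inf sqrt]]
    by blast
  ultimately show ?thesis by blast
qed

end
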